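(* Let $G$ be a connected graph on $n$ vertices with maximum degree $\Delta\ge1$. Then $G$ contains a forest $F$ and disjoint vertex sets $A_0,A_1\subseteq V(G)$ such that (i) $A_0\cup A_1$ is an independent set in $G$; (ii) $d_F(v)=d_G(v)$ for all $v\in A_0$; (iii) $d_F(v)\ge d_G(v)-1$ for all $v\in A_1$; (iv) $|A_0|+\frac12|A_1|\ge \gamma_\Delta n$, where \[\gamma_\Delta=\frac{1}{\Delta^2+\Delta+2}+\frac{3}{2(\Delta^2+2\Delta+3)}.\]
   Context: $d_F(v)$ and $d_G(v)$ denote the degree of $v$ in $F$ and in $G$ respectively. *)

theory Defs
  imports Complex_Main
begin

definition simple_graph :: "'a set \<Rightarrow> 'a set set \<Rightarrow> bool" where
  "simple_graph V E \<longleftrightarrow> finite V \<and> (\<forall>e\<in>E. e \<subseteq> V \<and> card e = 2)"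

definition degree :: "'a set set \<Rightarrow> 'a \<Rightarrow> nat" where
  "degree E v = card {e \<in> E. v \<in> e}"

definition max_degree :: "'a set \<Rightarrow> 'a set set \<Rightarrow> nat" where
  "max_degree V E = Max (degree E ` V)"

definition is_walk :: "'a set \<Rightarrow> 'a set set \<Rightarrow> 'a list \<Rightarrow> bool" where
  "is_walk V E xs \<longleftrightarrow> xs \<noteq> [] \<and> set xs \<subseteq> V \<and>
     (\<forall>i. Suc i < length xs \<longrightarrow> {xs ! i, xs ! Suc i} \<in> E)"

definition connected_graph :: "'a set \<Rightarrow> 'a set set \<Rightarrow> bool" where
  "connected_graph V E \<longleftrightarrow> V \<noteq> {} \<and>
     (\<forall>u\<in>V. \<forall>v\<in>V. \<exists>xs. is_walk V E xs \<and> hd xs = u \<and> last xs = v)"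

definition is_cycle :: "'a set set \<Rightarrow> 'a list \<Rightarrow> bool" where
  "is_cycle E xs \<longleftrightarrow> length xs \<ge> 3 \<and> distinct xs \<and>
     (\<forall>i. Suc i < length xs \<longrightarrow> {xs ! i, xs ! Suc i} \<in> E) \<and>
     {last xs, hd xs} \<in> E"

definition acyclic_edges :: "'a set set \<Rightarrow> bool" where
  "acyclic_edges E \<longleftrightarrow> (\<nexists>xs. is_cycle E xs)"

definition forest_in :: "'a set \<Rightarrow> 'a set set \<Rightarrow> 'a set set \<Rightarrow> bool" where
  "forest_in V E F \<longleftrightarrow> F \<subseteq> E \<and> acyclic_edges F"

definition independent_set :: "'a set set \<Rightarrow> 'a set \<Rightarrow> bool" where
  "independent_set E S \<longleftrightarrow> (\<forall>u\<in>S. \<forall>v\<in>S. {u, v} \<notin> E)"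

definition gamma :: "nat \<Rightarrow> real" where
  "gamma D = 1 / (real D ^ 2 + real D + 2) + 3 / (2 * (real D ^ 2 + 2 * real D + 3))"

end

theory Submission
  imports Defs
begin

text \<open>Grow a forest F together with an independent set A = A0 \<union> A1 such that every
  edge of F meets A. A vertex w outside A and its neighbourhood N(A) touches no edge of F, so
  adding w to A together with a star from w to all of its neighbours (for A0), or to all but
  one (for A1), keeps F a forest as long as at most one leaf of the star already lies on F;
  such leaves lie in N(A). Maximising |A0|, and then |A1|, therefore leaves every vertex
  outside A \<union> N(A) with at least 2, respectively 3, neighbours in N(A), and double counting
  the edges between A, N(A) and the remaining vertices gives
  2|V| \<le> (\<Delta>^2 + \<Delta> + 2) |A0| and 3|V| \<le> (\<Delta>^2 + 2\<Delta> + 3) (|A0| + |A1|).\<close>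

definition neighbours :: "'a set set \<Rightarrow> 'a \<Rightarrow> 'a set" where
  "neighbours E v = {u. {v, u} \<in> E}"

definition outer_nbhd :: "'a set set \<Rightarrow> 'a set \<Rightarrow> 'a set \<Rightarrow> 'a set" where
  "outer_nbhd E V A = {x \<in> V - A. \<exists>a\<in>A. {a, x} \<in> E}"

lemma neighbours_sym: "u \<in> neighbours E v \<longleftrightarrow> v \<in> neighbours E u"
  unfolding neighbours_def by (simp add: insert_commute)

lemma neighbours_subset:
  assumes "simple_graph V E"
  shows "neighbours E v \<subseteq> V"
  using assms unfolding simple_graph_def neighbours_def by blast

lemma finite_neighbours:
  assumes "simple_graph V E"
  shows "finite (neighbours E v)"
  using neighbours_subset[OF assms] assms unfolding simple_graph_def by (blast intro: finite_subset)

lemma not_in_neighbours_self: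
  assumes "simple_graph V E"
  shows "v \<notin> neighbours E v"
  using assms unfolding simple_graph_def neighbours_def by force

lemma card_2_doubleton:
  assumes "card e = 2" "a \<in> e" "b \<in> e" "a \<noteq> b"
  shows "e = {a, b}"
proof -
  obtain x y where "e = {x, y}" using assms(1) by (meson card_2_iff)
  with assms(2-4) show ?thesis by auto
qed

lemma degree_eq_card_neighbours:
  assumes "\<forall>e\<in>E. card e = 2"
  shows "degree E v = card (neighbours E v)"
proof -
  have "{e \<in> E. v \<in> e} = (\<lambda>u. {v, u}) ` neighbours E v"
  proof
    show "{e \<in> E. v \<in> e} \<subseteq> (\<lambda>u. {v, u}) ` neighbours E v"
    proof
      fix e assume e: "e \<in> {e \<in> E. v \<in> e}"
      then have "card e = 2" "v \<in> e" using assms by auto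
      moreover obtain u where "u \<in> e" "u \<noteq> v"
        using \<open>card e = 2\<close> by (metis card_2_iff insertCI)
      ultimately have "e = {v, u}" by (simp add: card_2_doubleton)
      with e show "e \<in> (\<lambda>u. {v, u}) ` neighbours E v" unfolding neighbours_def by auto
    qed
  qed (auto simp: neighbours_def)
  moreover have "inj_on (\<lambda>u. {v, u}) (neighbours E v)"
    by (auto simp: inj_on_def doubleton_eq_iff)
  ultimately show ?thesis unfolding degree_def by (simp add: card_image)
qed

lemma degree_le_max_degree:
  assumes "simple_graph V E" "v \<in> V"
  shows "degree E v \<le> max_degree V E"
  using assms unfolding simple_graph_def max_degree_def by simp

definition edge_count :: "'a set set \<Rightarrow> 'a set \<Rightarrow> 'a set \<Rightarrow> nat" where
  "edge_count E X Y = (\<Sum>x\<in>X. card (neighbours E x \<inter> Y))"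

lemma edge_count_commute:
  assumes "finite X" "finite Y"
  shows "edge_count E X Y = edge_count E Y X"
proof -
  have count: "card (neighbours E x \<inter> Z) = (\<Sum>z\<in>Z. if z \<in> neighbours E x then 1 else 0)"
    if "finite Z" for x and Z :: "'a set"
    using that by (simp add: sum.If_cases Int_commute)
  have "edge_count E X Y = (\<Sum>x\<in>X. \<Sum>y\<in>Y. if y \<in> neighbours E x then 1 else 0)"
    unfolding edge_count_def using count[OF assms(2)] by simp
  also have "\<dots> = (\<Sum>y\<in>Y. \<Sum>x\<in>X. if x \<in> neighbours E y then 1 else 0)"
    by (subst sum.swap) (simp add: neighbours_sym)
  also have "\<dots> = edge_count E Y X"
    unfolding edge_count_def using count[OF assms(1)] by simp
  finally show ?thesis .
qed

lemma edge_count_Un: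
  assumes "simple_graph V E" "Y \<inter> Z = {}"
  shows "edge_count E X (Y \<union> Z) = edge_count E X Y + edge_count E X Z"
proof -
  have "card (neighbours E x \<inter> (Y \<union> Z)) = card (neighbours E x \<inter> Y) + card (neighbours E x \<inter> Z)" for x
    using finite_neighbours[OF assms(1)] assms(2) by (subst card_Un_disjoint[symmetric]) (auto simp: Int_Un_distrib)
  then show ?thesis unfolding edge_count_def by (simp add: sum.distrib)
qed

lemma edge_count_le:
  assumes sg: "simple_graph V E" and deg: "\<And>v. v \<in> V \<Longrightarrow> degree E v \<le> D" and "X \<subseteq> V"
  shows "edge_count E X Y \<le> D * card X"
proof -
  have card2: "\<forall>e\<in>E. card e = 2" using sg unfolding simple_graph_def by blast
  have "card (neighbours E x \<inter> Y) \<le> D" if "x \<in> X" for x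
  proof -
    have "card (neighbours E x \<inter> Y) \<le> card (neighbours E x)"
      by (rule card_mono[OF finite_neighbours[OF sg]]) blast
    moreover have "x \<in> V" using that \<open>X \<subseteq> V\<close> by blast
    ultimately show ?thesis using deg degree_eq_card_neighbours[OF card2] by (metis le_trans)
  qed
  then have "edge_count E X Y \<le> (\<Sum>x\<in>X. D)" unfolding edge_count_def by (rule sum_mono)
  then show ?thesis by (simp add: mult.commute)
qed

lemma card_outer_nbhd_le_edge_count:
  assumes "finite A"
  shows "card (outer_nbhd E V A) \<le> edge_count E (outer_nbhd E V A) A"
proof -
  have "1 \<le> card (neighbours E x \<inter> A)" if x: "x \<in> outer_nbhd E V A" for x
  proof -
    obtain a where "a \<in> A" "{a, x} \<in> E" using x unfolding outer_nbhd_def by blast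
    then have "a \<in> neighbours E x \<inter> A" unfolding neighbours_def by (simp add: insert_commute)
    then show ?thesis using assms by (metis One_nat_def Suc_leI card_gt_0_iff empty_iff finite_Int)
  qed
  then have "(\<Sum>x\<in>outer_nbhd E V A. 1) \<le> edge_count E (outer_nbhd E V A) A"
    unfolding edge_count_def by (rule sum_mono)
  then show ?thesis by simp
qed

lemma is_cycle_edge_wrap:
  assumes cyc: "is_cycle F xs" and i: "i < length xs"
  shows "{xs ! i, xs ! (if Suc i = length xs then 0 else Suc i)} \<in> F"
proof (cases "Suc i = length xs")
  case True
  then have "xs ! i = last xs" "xs ! 0 = hd xs"
    by (metis diff_Suc_1 last_conv_nth list.size(3) nat.distinct(1),
        metis hd_conv_nth list.size(3) nat.distinct(1))
  moreover have "{last xs, hd xs} \<in> F" using cyc unfolding is_cycle_def by blast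
  ultimately show ?thesis using True by simp
next
  case False
  then have "Suc i < length xs" using i by simp
  then show ?thesis using False cyc unfolding is_cycle_def by simp
qed

lemma is_cycle_two_neighbours:
  assumes cyc: "is_cycle F xs" and v: "v \<in> set xs"
  shows "\<exists>a b. a \<noteq> b \<and> a \<noteq> v \<and> b \<noteq> v \<and> {v, a} \<in> F \<and> {v, b} \<in> F \<and> a \<in> set xs \<and> b \<in> set xs"
proof -
  define n where "n = length xs"
  define succ where "succ j = (if Suc j = n then 0 else Suc j)" for j
  have n: "n \<ge> 3" and dist: "distinct xs" using cyc unfolding is_cycle_def n_def by auto
  obtain i where i: "i < n" "v = xs ! i" using v unfolding n_def by (metis in_set_conv_nth)
  define j where "j = (if i = 0 then n - 1 else i - 1)"
  have j: "j < n" "succ j = i" using i n unfolding j_def succ_def by auto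
  have edge: "{xs ! k, xs ! succ k} \<in> F" if "k < n" for k
    using is_cycle_edge_wrap[OF cyc, of k] that unfolding succ_def n_def .
  have neq: "xs ! p \<noteq> xs ! q" if "p < n" "q < n" "p \<noteq> q" for p q
    using dist that unfolding n_def by (simp add: nth_eq_iff_index_eq)
  have succ: "succ i < n" "succ i \<noteq> i" "j \<noteq> i" "succ i \<noteq> j"
    using i(1) j n unfolding succ_def j_def by auto
  have "xs ! succ i \<noteq> xs ! j" "xs ! succ i \<noteq> v" "xs ! j \<noteq> v"
    using neq succ i j(1) by simp_all
  moreover have "{v, xs ! succ i} \<in> F" "{v, xs ! j} \<in> F"
    using edge[OF i(1)] edge[OF j(1)] i(2) j(2) by (simp_all add: insert_commute)
  moreover have "xs ! succ i \<in> set xs" "xs ! j \<in> set xs"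
    using succ(1) j(1) unfolding n_def by simp_all
  ultimately show ?thesis by blast
qed

lemma is_cycle_restrict:
  assumes cyc: "is_cycle F' xs"
    and F: "\<And>x y. {x, y} \<in> F' \<Longrightarrow> x \<in> set xs \<Longrightarrow> y \<in> set xs \<Longrightarrow> {x, y} \<in> F"
  shows "is_cycle F xs"
proof -
  have ne: "xs \<noteq> []" using cyc unfolding is_cycle_def by auto
  have "{xs ! i, xs ! Suc i} \<in> F" if "Suc i < length xs" for i
    using cyc that unfolding is_cycle_def by (intro F) auto
  moreover have "{last xs, hd xs} \<in> F"
    using cyc ne unfolding is_cycle_def by (intro F) auto
  ultimately show ?thesis using cyc unfolding is_cycle_def by blast
qed

lemma acyclic_edges_add_star:
  assumes acyc: "acyclic_edges F" and w: "w \<notin> \<Union>F" "w \<notin> U"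
    and U: "finite U" "card (U \<inter> \<Union>F) \<le> 1"
  shows "acyclic_edges (F \<union> (\<lambda>u. {w, u}) ` U)"
  unfolding acyclic_edges_def
proof
  let ?F' = "F \<union> (\<lambda>u. {w, u}) ` U"
  assume "\<exists>xs. is_cycle ?F' xs"
  then obtain xs where cyc: "is_cycle ?F' xs" ..
  show False
  proof (cases "w \<in> set xs")
    case False
    have "{x, y} \<in> F" if "{x, y} \<in> ?F'" "x \<in> set xs" "y \<in> set xs" for x y
      using that False by (auto simp: doubleton_eq_iff)
    with acyc cyc show False unfolding acyclic_edges_def by (blast dest: is_cycle_restrict)
  next
    case True
    have star_leaf: "d \<in> U" if "{w, d} \<in> ?F'" "d \<noteq> w" for d
      using that w(1) by (auto simp: doubleton_eq_iff)
    obtain a b where ab: "a \<noteq> b" "a \<noteq> w" "b \<noteq> w" "{w, a} \<in> ?F'" "{w, b} \<in> ?F'"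
      "a \<in> set xs" "b \<in> set xs"
      using is_cycle_two_neighbours[OF cyc True] by blast
    \<comment> \<open>One of the two star leaves next to w on the cycle is new, and its only edge is the one to w.\<close>
    obtain c where c: "c \<in> U" "c \<notin> \<Union>F" "c \<in> set xs"
    proof -
      have "card {a, b} = 2" using ab(1) by simp
      then have "\<not> {a, b} \<subseteq> U \<inter> \<Union>F"
        using U card_mono[of "U \<inter> \<Union>F" "{a, b}"] by auto
      moreover have "a \<in> U" "b \<in> U" using star_leaf[OF ab(4,2)] star_leaf[OF ab(5,3)] .
      ultimately show ?thesis using that ab(6,7) by blast
    qed
    have "d = w" if "{c, d} \<in> ?F'" for d
    proof -
      have "{c, d} \<notin> F" using c(2) by blast
      with that have "{c, d} \<in> (\<lambda>u. {w, u}) ` U" by simp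
      then obtain u where "{c, d} = {w, u}" by blast
      moreover have "c \<noteq> w" using c(1) w(2) by blast
      ultimately show "d = w" by (metis doubleton_eq_iff)
    qed
    then show False using is_cycle_two_neighbours[OF cyc c(3)] by blast
  qed
qed

lemma neighbours_add_star_centre:
  assumes "w \<notin> \<Union>F" "w \<notin> U"
  shows "neighbours (F \<union> (\<lambda>u. {w, u}) ` U) w = U"
  using assms unfolding neighbours_def by (auto simp: doubleton_eq_iff)

lemma neighbours_add_star_other:
  assumes "v \<noteq> w" "v \<notin> U"
  shows "neighbours (F \<union> (\<lambda>u. {w, u}) ` U) v = neighbours F v"
  using assms unfolding neighbours_def by (auto simp: doubleton_eq_iff)

lemma exists_subset_drop_one:
  assumes "finite S" "card (S \<inter> T) \<le> 2"
  obtains U where "U \<subseteq> S" "card (U \<inter> T) \<le> 1" "card S \<le> card U + 1"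
proof (cases "S \<inter> T = {}")
  case True
  then show ?thesis using that[of S] by simp
next
  case False
  then obtain x where x: "x \<in> S \<inter> T" by blast
  have "(S - {x}) \<inter> T = S \<inter> T - {x}" by blast
  then have "card ((S - {x}) \<inter> T) \<le> 1" using x assms by simp
  moreover have "card S \<le> card (S - {x}) + 1" using x assms(1) by (simp add: card_Diff_singleton)
  ultimately show ?thesis using that[of "S - {x}"] by blast
qed

text \<open>The anchoring condition keeps every vertex outside A0 \<union> A1 and its neighbourhood off
  the forest, so that a star can be grown from it.\<close>
definition anchored_forest :: "'a set \<Rightarrow> 'a set set \<Rightarrow> 'a set set \<Rightarrow> 'a set \<Rightarrow> 'a set \<Rightarrow> bool" where
  "anchored_forest V E F A0 A1 \<longleftrightarrow> forest_in V E F \<and> A0 \<subseteq> V \<and> A1 \<subseteq> V \<and> A0 \<inter> A1 = {} \<and>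
     independent_set E (A0 \<union> A1) \<and>
     (\<forall>v\<in>A0. degree F v = degree E v) \<and> (\<forall>v\<in>A1. degree F v + 1 \<ge> degree E v) \<and>
     (\<forall>e\<in>F. e \<inter> (A0 \<union> A1) \<noteq> {})"

lemma anchored_forestD:
  assumes "anchored_forest V E F A0 A1"
  shows "F \<subseteq> E" "acyclic_edges F" "A0 \<subseteq> V" "A1 \<subseteq> V" "A0 \<inter> A1 = {}"
    "independent_set E (A0 \<union> A1)"
    "v \<in> A0 \<Longrightarrow> degree F v = degree E v" "v \<in> A1 \<Longrightarrow> degree E v \<le> degree F v + 1"
    "e \<in> F \<Longrightarrow> e \<inter> (A0 \<union> A1) \<noteq> {}"
  using assms unfolding anchored_forest_def forest_in_def by auto

lemma anchored_forest_empty: "anchored_forest V E {} {} {}"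
proof -
  have "\<not> is_cycle {} xs" for xs :: "'a list" unfolding is_cycle_def by simp
  then show ?thesis
    unfolding anchored_forest_def forest_in_def acyclic_edges_def independent_set_def by simp
qed

lemma anchored_forest_vertices:
  assumes sg: "simple_graph V E" and af: "anchored_forest V E F A0 A1"
  shows "\<Union>F \<subseteq> A0 \<union> A1 \<union> outer_nbhd E V (A0 \<union> A1)"
proof
  fix x assume "x \<in> \<Union>F"
  then obtain e where e: "x \<in> e" "e \<in> F" by blast
  then have eE: "e \<in> E" using anchored_forestD(1)[OF af] by blast
  then have e2: "card e = 2" "e \<subseteq> V" using sg unfolding simple_graph_def by auto
  obtain a where a: "a \<in> e" "a \<in> A0 \<union> A1" using anchored_forestD(9)[OF af e(2)] by blast
  show "x \<in> A0 \<union> A1 \<union> outer_nbhd E V (A0 \<union> A1)"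
  proof (cases "x = a")
    case False
    then have "{a, x} \<in> E" using card_2_doubleton[OF e2(1) a(1) e(1)] eE by simp
    then show ?thesis using a(2) e(1) e2(2) unfolding outer_nbhd_def by blast
  qed (use a in blast)
qed

lemma anchored_forest_add_star:
  assumes sg: "simple_graph V E" and af: "anchored_forest V E F A0 A1"
    and w: "w \<in> V - (A0 \<union> A1) - outer_nbhd E V (A0 \<union> A1)"
    and U: "U \<subseteq> neighbours E w" "card (U \<inter> outer_nbhd E V (A0 \<union> A1)) \<le> 1"
  defines "F' \<equiv> F \<union> (\<lambda>u. {w, u}) ` U"
  shows "forest_in V E F'" "independent_set E (insert w (A0 \<union> A1))"
    "\<forall>e\<in>F'. e \<inter> insert w (A0 \<union> A1) \<noteq> {}"
    "degree F' w = card U" "\<And>a. a \<in> A0 \<union> A1 \<Longrightarrow> degree F' a = degree F a"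
proof -
  let ?A = "A0 \<union> A1"
  note FE = anchored_forestD(1,2)[OF af]
  have F'E: "F' \<subseteq> E" using FE(1) U(1) unfolding F'_def neighbours_def by blast
  have w_off: "w \<notin> \<Union>F" using anchored_forest_vertices[OF sg af] w by blast
  have wU: "w \<notin> U" using U(1) not_in_neighbours_self[OF sg] by blast
  have finU: "finite U" using U(1) finite_neighbours[OF sg] by (rule finite_subset)
  have "{a, w} \<notin> E" if "a \<in> ?A" for a
    using that w unfolding outer_nbhd_def by blast
  then have not_adj: "{a, w} \<notin> E" "{w, a} \<notin> E" if "a \<in> ?A" for a
    using that by (simp_all add: insert_commute)
  have U_off: "U \<inter> ?A = {}"
    using U(1) not_adj(2) unfolding neighbours_def by blast
  have "U \<inter> \<Union>F \<subseteq> U \<inter> outer_nbhd E V ?A"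
    using anchored_forest_vertices[OF sg af] U_off by blast
  then have "card (U \<inter> \<Union>F) \<le> 1"
    using U(2) card_mono[OF finite_Int[OF disjI1[OF finU]]] le_trans by blast
  then show "forest_in V E F'"
    using acyclic_edges_add_star[OF FE(2) w_off wU finU] F'E unfolding forest_in_def F'_def by blast
  have card2: "\<forall>e\<in>F'. card e = 2" using F'E sg unfolding simple_graph_def by blast
  then have card2F: "\<forall>e\<in>F. card e = 2" unfolding F'_def by blast
  show "degree F' w = card U"
    using degree_eq_card_neighbours[OF card2] neighbours_add_star_centre[OF w_off wU]
    unfolding F'_def by simp
  show "degree F' a = degree F a" if "a \<in> ?A" for a
  proof -
    have "a \<noteq> w" "a \<notin> U" using that w U_off by blast+
    then have "neighbours F' a = neighbours F a"
      unfolding F'_def by (rule neighbours_add_star_other)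
    then show ?thesis
      using degree_eq_card_neighbours[OF card2] degree_eq_card_neighbours[OF card2F] by simp
  qed
  show "\<forall>e\<in>F'. e \<inter> insert w ?A \<noteq> {}"
    using anchored_forestD(9)[OF af] unfolding F'_def by blast
  have "{w, w} \<notin> E" using not_in_neighbours_self[OF sg, of w] unfolding neighbours_def by simp
  then show "independent_set E (insert w ?A)"
    using anchored_forestD(6)[OF af] not_adj unfolding independent_set_def by blast
qed

lemma anchored_forest_insert_A0:
  assumes sg: "simple_graph V E" and af: "anchored_forest V E F A0 A1"
    and w: "w \<in> V - (A0 \<union> A1) - outer_nbhd E V (A0 \<union> A1)"
    and few: "card (neighbours E w \<inter> outer_nbhd E V (A0 \<union> A1)) \<le> 1"
  shows "\<exists>F'. anchored_forest V E F' (insert w A0) A1"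
proof -
  define F' where "F' = F \<union> (\<lambda>u. {w, u}) ` neighbours E w"
  note star = anchored_forest_add_star[OF sg af w subset_refl few, folded F'_def]
  have card2: "\<forall>e\<in>E. card e = 2" using sg unfolding simple_graph_def by blast
  have "degree F' v = degree E v" if "v \<in> insert w A0" for v
    using that star(4,5) anchored_forestD(7)[OF af] degree_eq_card_neighbours[OF card2] by auto
  moreover have "degree E v \<le> degree F' v + 1" if "v \<in> A1" for v
    using that star(5) anchored_forestD(8)[OF af] by simp
  moreover have "insert w A0 \<union> A1 = insert w (A0 \<union> A1)" by simp
  ultimately have "anchored_forest V E F' (insert w A0) A1"
    using star(1-3) anchored_forestD(3-5)[OF af] w unfolding anchored_forest_def by auto
  then show ?thesis ..
qed

lemma anchored_forest_insert_A1:
  assumes sg: "simple_graph V E" and af: "anchored_forest V E F A0 A1"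
    and w: "w \<in> V - (A0 \<union> A1) - outer_nbhd E V (A0 \<union> A1)"
    and few: "card (neighbours E w \<inter> outer_nbhd E V (A0 \<union> A1)) \<le> 2"
  shows "\<exists>F'. anchored_forest V E F' A0 (insert w A1)"
proof -
  obtain U where U: "U \<subseteq> neighbours E w" "card (U \<inter> outer_nbhd E V (A0 \<union> A1)) \<le> 1"
    and most: "card (neighbours E w) \<le> card U + 1"
    using exists_subset_drop_one[OF finite_neighbours[OF sg] few] by blast
  define F' where "F' = F \<union> (\<lambda>u. {w, u}) ` U"
  note star = anchored_forest_add_star[OF sg af w U, folded F'_def]
  have card2: "\<forall>e\<in>E. card e = 2" using sg unfolding simple_graph_def by blast
  have "degree F' v = degree E v" if "v \<in> A0" for v
    using that star(5) anchored_forestD(7)[OF af] by simp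
  moreover have "degree E v \<le> degree F' v + 1" if "v \<in> insert w A1" for v
    using that star(4,5) anchored_forestD(8)[OF af] most degree_eq_card_neighbours[OF card2]
    by auto
  moreover have "A0 \<union> insert w A1 = insert w (A0 \<union> A1)" by simp
  ultimately have "anchored_forest V E F' A0 (insert w A1)"
    using star(1-3) anchored_forestD(3-5)[OF af] w unfolding anchored_forest_def by auto
  then show ?thesis ..
qed

lemma ex_card_maximal:
  assumes "finite V" "P x0 B0" "\<And>x B. P x B \<Longrightarrow> B \<subseteq> V"
  shows "\<exists>x B. P x B \<and> (\<forall>y C. P y C \<longrightarrow> card C \<le> card B)"
proof -
  have "\<exists>p. case_prod P p \<and> (\<forall>q. case_prod P q \<longrightarrow> card (snd q) \<le> card (snd p))"
  proof (rule ex_has_greatest_nat[where k = "(x0, B0)" and b = "card V + 1"])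
    show "\<forall>q. case_prod P q \<longrightarrow> card (snd q) < card V + 1"
      using assms(1,3) by (auto simp: card_mono less_Suc_eq_le)
  qed (use assms(2) in simp)
  then show ?thesis by fastforce
qed

lemma ex_anchored_forest_A0_far:
  assumes sg: "simple_graph V E"
  obtains F A0 where "anchored_forest V E F A0 {}"
    "\<And>w. w \<in> V - A0 - outer_nbhd E V A0 \<Longrightarrow> 2 \<le> card (neighbours E w \<inter> outer_nbhd E V A0)"
proof -
  have finV: "finite V" using sg unfolding simple_graph_def by simp
  have "\<exists>F A. anchored_forest V E F A {} \<and> (\<forall>F' A'. anchored_forest V E F' A' {} \<longrightarrow> card A' \<le> card A)"
    by (rule ex_card_maximal[OF finV]) (use anchored_forest_empty anchored_forestD(3) in blast)+
  then obtain F A0 where af: "anchored_forest V E F A0 {}"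
    and max: "\<And>F' A. anchored_forest V E F' A {} \<Longrightarrow> card A \<le> card A0" by blast
  have "2 \<le> card (neighbours E w \<inter> outer_nbhd E V A0)" if w: "w \<in> V - A0 - outer_nbhd E V A0" for w
  proof (rule ccontr)
    assume "\<not> ?thesis"
    then obtain F' where "anchored_forest V E F' (insert w A0) {}"
      using anchored_forest_insert_A0[OF sg af] w by force
    then have "card (insert w A0) \<le> card A0" by (rule max)
    moreover have "finite A0" using anchored_forestD(3)[OF af] finV by (rule finite_subset)
    ultimately show False using w by simp
  qed
  with af show ?thesis by (rule that)
qed

lemma ex_anchored_forest_A1_far:
  assumes sg: "simple_graph V E" and af0: "anchored_forest V E F0 A0 B"
  obtains F A1 where "anchored_forest V E F A0 A1"
    "\<And>w. w \<in> V - (A0 \<union> A1) - outer_nbhd E V (A0 \<union> A1) \<Longrightarrow>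
      3 \<le> card (neighbours E w \<inter> outer_nbhd E V (A0 \<union> A1))"
proof -
  have finV: "finite V" using sg unfolding simple_graph_def by simp
  have "\<exists>F A1. anchored_forest V E F A0 A1 \<and> (\<forall>F' A'. anchored_forest V E F' A0 A' \<longrightarrow> card A' \<le> card A1)"
    by (rule ex_card_maximal[OF finV]) (use af0 anchored_forestD(4) in blast)+
  then obtain F A1 where af: "anchored_forest V E F A0 A1"
    and max: "\<And>F' A'. anchored_forest V E F' A0 A' \<Longrightarrow> card A' \<le> card A1" by blast
  have "3 \<le> card (neighbours E w \<inter> outer_nbhd E V (A0 \<union> A1))"
    if w: "w \<in> V - (A0 \<union> A1) - outer_nbhd E V (A0 \<union> A1)" for w
  proof (rule ccontr)
    assume "\<not> ?thesis"
    then obtain F' where "anchored_forest V E F' A0 (insert w A1)"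
      using anchored_forest_insert_A1[OF sg af w] by force
    then have "card (insert w A1) \<le> card A1" by (rule max)
    moreover have "finite A1" using anchored_forestD(4)[OF af] finV by (rule finite_subset)
    ultimately show False using w by simp
  qed
  with af show ?thesis by (rule that)
qed

lemma card_vertices_le_by_outer_nbhd:
  assumes sg: "simple_graph V E" and deg: "\<And>v. v \<in> V \<Longrightarrow> degree E v \<le> D"
    and AV: "A \<subseteq> V" and k: "1 \<le> k"
    and far: "\<And>w. w \<in> V - A - outer_nbhd E V A \<Longrightarrow> k \<le> card (neighbours E w \<inter> outer_nbhd E V A)"
  shows "k * card V \<le> (k + (k + D - 1) * D) * card A"
proof -
  define N where "N = outer_nbhd E V A"
  define R where "R = V - A - N"
  have NV: "N \<subseteq> V - A" unfolding N_def outer_nbhd_def by blast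
  have fin: "finite V" "finite A" "finite N" "finite R"
    using sg AV NV unfolding simple_graph_def R_def by (auto intro: finite_subset)
  have V_eq: "card V = card A + card N + card R"
  proof -
    have "V = A \<union> N \<union> R" "A \<inter> N = {}" "(A \<union> N) \<inter> R = {}"
      using AV NV unfolding R_def by blast+
    then show ?thesis using fin by (simp add: card_Un_disjoint)
  qed
  have N_A: "card N \<le> edge_count E N A"
    unfolding N_def using card_outer_nbhd_le_edge_count[OF fin(2)] .
  have "(\<Sum>w\<in>R. k) \<le> edge_count E R N"
    unfolding edge_count_def by (rule sum_mono) (use far in \<open>simp add: R_def N_def\<close>)
  also have "\<dots> = edge_count E N R" using fin by (simp add: edge_count_commute)
  finally have "k * card R + card N \<le> edge_count E N R + edge_count E N A"
    using N_A by (simp add: mult.commute)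
  also have "\<dots> = edge_count E N (R \<union> A)" by (rule edge_count_Un[OF sg, symmetric]) (auto simp: R_def)
  also have "\<dots> \<le> D * card N" using edge_count_le[OF sg deg] NV by blast
  finally have R_le: "k * card R + card N \<le> D * card N" .
  have "card N \<le> edge_count E A N" using N_A fin by (simp add: edge_count_commute)
  also have "\<dots> \<le> D * card A" by (rule edge_count_le[OF sg deg AV])
  finally have "(k + D - 1) * card N \<le> (k + D - 1) * (D * card A)" by (rule mult_le_mono2)
  \<comment> \<open>With R_le, k |V| \<le> k |A| + (k + D - 1) |N|.\<close>
  moreover have "(k + D - 1) * card N + card N = k * card N + D * card N"
    using k by (cases k) (simp_all add: algebra_simps)
  ultimately show ?thesis using R_le V_eq by (simp add: algebra_simps)
qed

lemma gamma_mult_le: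
  fixes n a0 a1 D :: nat
  assumes h0: "2 * n \<le> (2 + (2 + D - 1) * D) * a0"
    and h1: "3 * n \<le> (3 + (3 + D - 1) * D) * (a0 + a1)"
  shows "gamma D * n \<le> a0 + a1 / 2"
proof -
  define p where "p = real D ^ 2 + real D + 2"
  define q where "q = real D ^ 2 + 2 * real D + 3"
  have pq: "p > 0" "q > 0" unfolding p_def q_def by (simp_all add: add_nonneg_pos)
  have "real (2 * n) \<le> real ((2 + (2 + D - 1) * D) * a0)" using h0 by (rule of_nat_mono)
  then have "2 * real n \<le> p * real a0" unfolding p_def by (simp add: power2_eq_square algebra_simps)
  then have "real n / p \<le> real a0 / 2" using pq(1) by (simp add: field_simps)
  moreover have "real (3 * n) \<le> real ((3 + (3 + D - 1) * D) * (a0 + a1))" using h1 by (rule of_nat_mono)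
  then have "3 * real n \<le> q * (real a0 + real a1)" unfolding q_def by (simp add: power2_eq_square algebra_simps)
  then have "3 * real n / (2 * q) \<le> (real a0 + real a1) / 2" using pq(2) by (simp add: field_simps)
  ultimately have "real n / p + 3 * real n / (2 * q) \<le> real a0 / 2 + (real a0 + real a1) / 2"
    by (rule add_mono)
  moreover have "gamma D * real n = real n / p + 3 * real n / (2 * q)"
    unfolding gamma_def p_def q_def by (simp add: field_simps)
  ultimately show ?thesis by (simp add: field_simps)
qed

theorem lemma5p2:
  fixes V :: "'a set" and E :: "'a set set"
  assumes "simple_graph V E"
    and "connected_graph V E"
    and "max_degree V E \<ge> 1"
  shows "\<exists>F A0 A1. forest_in V E F \<and> A0 \<subseteq> V \<and> A1 \<subseteq> V \<and> A0 \<inter> A1 = {} \<and>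
           independent_set E (A0 \<union> A1) \<and>
           (\<forall>v\<in>A0. degree F v = degree E v) \<and>
           (\<forall>v\<in>A1. degree F v + 1 \<ge> degree E v) \<and>
           real (card A0) + real (card A1) / 2 \<ge> gamma (max_degree V E) * real (card V)"
proof -
  note sg = assms(1) and deg = degree_le_max_degree[OF assms(1)]
  obtain F0 A0 where af0: "anchored_forest V E F0 A0 {}"
    and far0: "\<And>w. w \<in> V - A0 - outer_nbhd E V A0 \<Longrightarrow> 2 \<le> card (neighbours E w \<inter> outer_nbhd E V A0)"
    using ex_anchored_forest_A0_far[OF sg] by blast
  obtain F A1 where af: "anchored_forest V E F A0 A1"
    and far1: "\<And>w. w \<in> V - (A0 \<union> A1) - outer_nbhd E V (A0 \<union> A1) \<Longrightarrow>
      3 \<le> card (neighbours E w \<inter> outer_nbhd E V (A0 \<union> A1))"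
    using ex_anchored_forest_A1_far[OF sg af0] by blast
  have "2 * card V \<le> (2 + (2 + max_degree V E - 1) * max_degree V E) * card A0"
    using card_vertices_le_by_outer_nbhd[OF sg deg anchored_forestD(3)[OF af0] _ far0] by simp
  moreover have "3 * card V \<le> (3 + (3 + max_degree V E - 1) * max_degree V E) * card (A0 \<union> A1)"
    using card_vertices_le_by_outer_nbhd[OF sg deg _ _ far1] anchored_forestD(3,4)[OF af] by simp
  moreover have "card (A0 \<union> A1) = card A0 + card A1"
    using anchored_forestD(3-5)[OF af] sg unfolding simple_graph_def
    by (simp add: card_Un_disjoint finite_subset)
  ultimately have "gamma (max_degree V E) * card V \<le> card A0 + card A1 / 2"
    by (intro gamma_mult_le) simp_all
  moreover have "forest_in V E F" using anchored_forestD(1,2)[OF af] unfolding forest_in_def ..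
  ultimately show ?thesis
    by (intro exI[of _ F] exI[of _ A0] exI[of _ A1] conjI ballI) (use anchored_forestD[OF af] in simp_all)
qed

end
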